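(* $w(\mathsf{T_f}(2))\ge\omega+1$.
   Context: $2$ denotes the two-element chain $0<1$. Trees: for a non-empty quasi-order $Q$, $\mathsf{T_f}(Q)$ is the smallest class containing the leaf $\cdot q$ for each $q\in Q$, and containing $\cdot(\tau_0,\dots,\tau_{k-1})$ (an unlabelled root whose children are the $\tau_i$) for every finite set $\{\tau_0,\dots,\tau_{k-1}\}\subseteq\mathsf{T_f}(Q)$ with $k\ge1$. Its order $\le_T$ is defined recursively: - $\cdot x\le_T\cdot y$ iff $x\le_Q y$; - $\cdot x\le_T\cdot(\tau_j)_{j<l}$ iff $\cdot x\le_T\tau_j$ for some $j$; - $\cdot(\sigma_i)_{i<k}\le_T\cdot(\tau_j)_{j<l}$ iff every $\sigma_i$ is $\le_T$ some $\tau_j$; - a non-leaf tree is never $\le_T$ a leaf. Width: for a well-quasi-order $P$, $w(P)=\sup_{x\in P}(w(L_\bot(x))+1)$, where $L_\bot(x)=\{y\in P: x\not\le y\text{ and }y\not\le x\}$ carries the induced order. This is a well-founded recursion. *)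

theory Defs
  imports Main "HOL-Library.FSet" "HOL-Library.Product_Lexorder"
begin

datatype 'q tree = Leaf 'q | Node "'q tree fset"

inductive tf :: "'q tree \<Rightarrow> bool" where
  tf_leaf: "tf (Leaf q)"
| tf_node: "ts \<noteq> {||} \<Longrightarrow> (\<forall>t. t |\<in>| ts \<longrightarrow> tf t) \<Longrightarrow> tf (Node ts)"

definition Tf :: "'q tree set" where
  "Tf = {t. tf t}"

inductive tree_le :: "('q \<Rightarrow> 'q \<Rightarrow> bool) \<Rightarrow> 'q tree \<Rightarrow> 'q tree \<Rightarrow> bool"
  for le :: "'q \<Rightarrow> 'q \<Rightarrow> bool" where
  leaf_leaf: "le x y \<Longrightarrow> tree_le le (Leaf x) (Leaf y)"
| leaf_node: "t |\<in>| ts \<Longrightarrow> tree_le le (Leaf x) t \<Longrightarrow> tree_le le (Leaf x) (Node ts)"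
| node_node: "(\<forall>s. s |\<in>| ss \<longrightarrow> (\<exists>t. t |\<in>| ts \<and> tree_le le s t))
              \<Longrightarrow> tree_le le (Node ss) (Node ts)"

definition incomparable_part :: "('a \<Rightarrow> 'a \<Rightarrow> bool) \<Rightarrow> 'a set \<Rightarrow> 'a \<Rightarrow> 'a set" where
  "incomparable_part le P x = {y \<in> P. \<not> le x y \<and> \<not> le y x}"

(* width_ge le P \<alpha>  means  w(P) \<ge> \<alpha>, where w(P) = sup_{x\<in>P} (w(L_bot(x)) + 1).
   Since  sup_{x\<in>P} (w_x + 1) \<ge> \<alpha>  iff  \<forall>\<beta><\<alpha>. \<exists>x\<in>P. w_x \<ge> \<beta>,
   this is the defining recursion of the width, read off as a
   (well-founded in \<alpha>) recursion for the predicate "w(P) \<ge> \<alpha>",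
   with ordinals \<alpha> taken from an arbitrary well-ordered type. *)
inductive width_ge :: "('a \<Rightarrow> 'a \<Rightarrow> bool) \<Rightarrow> 'a set \<Rightarrow> 'o::wellorder \<Rightarrow> bool"
  for le :: "'a \<Rightarrow> 'a \<Rightarrow> bool" where
  "(\<forall>\<beta><\<alpha>. \<exists>x\<in>P. width_ge le (incomparable_part le P x) \<beta>) \<Longrightarrow> width_ge le P \<alpha>"

(* Ordinals below \<omega>^2 are represented by nat \<times> nat with lexicographic order:
   (a, b) stands for \<omega>\<cdot>a + b.  Hence \<omega> + 1 = (1, 1). *)
definition omega_plus_one :: "nat \<times> nat" where
  "omega_plus_one = (1, 1)"

end

theory Submission
  imports Defs
begin

text \<open>Let \<open>x\<close> be the chain of three unlabelled nodes above a leaf labelled 1, and \<open>q\<^sub>k\<close>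
  the chain of \<open>k\<close> nodes above a leaf labelled 0. For every \<open>n\<close>, the trees
  \<open>\<cdot>(\<cdot>(\<cdot>1, q\<^sub>k), q\<^sub>l)\<close> with \<open>k + l = 2n + 2\<close> and \<open>k < n\<close> form an antichain of size \<open>n\<close>:
  comparing the left children forces \<open>k \<le> k'\<close>, and \<open>q\<^sub>l\<close> is too deep to go below the left
  child, which forces \<open>l \<le> l'\<close>. They all lie in \<open>L\<^sub>\<bottom>(x)\<close>, since the 1 of \<open>x\<close> is too deep
  and \<open>q\<^sub>l\<close> is too long. Hence \<open>w(L\<^sub>\<bottom>(x)) \<ge> \<omega>\<close> and \<open>w(T\<^sub>f(2)) \<ge> \<omega> + 1\<close>.\<close>

lemma width_ge_antimono:
  assumes "width_ge le P \<alpha>" and "\<beta> \<le> \<alpha>"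
  shows "width_ge le P \<beta>"
  using assms by (auto elim!: width_ge.cases intro!: width_ge.intros)

lemma width_ge_succI:
  assumes "x \<in> P" and "width_ge le (incomparable_part le P x) \<beta>"
    and "\<And>\<gamma>. \<gamma> < \<alpha> \<Longrightarrow> \<gamma> \<le> \<beta>"
  shows "width_ge le P \<alpha>"
  using assms by (blast intro: width_ge.intros width_ge_antimono)

lemma width_ge_cofinalI:
  assumes "\<And>\<beta>. \<beta> < \<alpha> \<Longrightarrow> \<exists>\<gamma>>\<beta>. width_ge le P \<gamma>"
  shows "width_ge le P \<alpha>"
  using assms by (blast elim: width_ge.cases intro: width_ge.intros)

lemma width_ge_antichain:
  fixes n :: nat
  assumes "\<And>i. i < n \<Longrightarrow> f i \<in> P"
    and "\<And>i j. i < n \<Longrightarrow> j < n \<Longrightarrow> i \<noteq> j \<Longrightarrow> \<not> le (f i) (f j)"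
  shows "width_ge le P (0::nat, n)"
  using assms
proof (induction n arbitrary: P)
  case 0
  show ?case by (rule width_ge.intros) (simp add: less_prod_def)
next
  case (Suc n)
  have "width_ge le (incomparable_part le P (f n)) (0::nat, n)"
    by (rule Suc.IH) (use Suc.prems in \<open>auto simp: incomparable_part_def\<close>)
  then show ?case
    by (rule width_ge_succI[rotated]) (use Suc.prems in \<open>auto simp: less_prod_def\<close>)
qed

lemma width_ge_omega:
  assumes "\<And>n :: nat. width_ge le P (0::nat, n)"
  shows "width_ge le P (1::nat, 0::nat)"
proof (rule width_ge_cofinalI)
  fix \<beta> :: "nat \<times> nat"
  assume "\<beta> < (1, 0)"
  then have "\<beta> < (0, Suc (snd \<beta>))"
    by (cases \<beta>) (simp add: less_prod_def)
  with assms show "\<exists>\<gamma>>\<beta>. width_ge le P \<gamma>"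
    by blast
qed

inductive_simps tree_le_Leaf_Leaf: "tree_le le (Leaf x) (Leaf y)"
inductive_simps tree_le_Node_Leaf: "tree_le le (Node ss) (Leaf y)"
inductive_simps tree_le_Leaf_Node: "tree_le le (Leaf x) (Node ts)"
inductive_simps tree_le_Node_Node: "tree_le le (Node ss) (Node ts)"

lemmas tree_le_simps = tree_le_Leaf_Leaf tree_le_Node_Leaf tree_le_Leaf_Node tree_le_Node_Node

primrec nest :: "nat \<Rightarrow> 'q tree \<Rightarrow> 'q tree" where
  "nest 0 t = t"
| "nest (Suc k) t = Node {|nest k t|}"

lemma tf_nest: "tf t \<Longrightarrow> tf (nest k t)"
  by (induction k) (auto intro: tf.intros)

lemma tree_le_Leaf_nest: "tree_le le (Leaf x) (nest k (Leaf y)) \<longleftrightarrow> le x y"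
  by (induction k) (auto simp: tree_le_simps)

lemma tree_le_nest_nest:
  "tree_le le (nest j (Leaf x)) (nest k (Leaf y)) \<longleftrightarrow> j \<le> k \<and> le x y"
proof (induction j arbitrary: k)
  case 0 then show ?case by (simp add: tree_le_Leaf_nest)
next
  case (Suc j) then show ?case by (cases k) (auto simp: tree_le_simps)
qed

lemma tree_le_nest_Leaf: "tree_le le (nest j (Leaf x)) (Leaf y) \<longleftrightarrow> j = 0 \<and> le x y"
  using tree_le_nest_nest[of le j x 0 y] by simp

abbreviation bool_tree_le :: "bool tree \<Rightarrow> bool tree \<Rightarrow> bool" where
  "bool_tree_le \<equiv> tree_le (\<le>)"

definition tagged :: "nat \<Rightarrow> bool tree" where
  "tagged k = Node {|Leaf True, nest k (Leaf False)|}"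

lemma tagged_le_tagged: "bool_tree_le (tagged k) (tagged k') \<longleftrightarrow> k \<le> k'"
  by (auto simp: tagged_def tree_le_simps tree_le_nest_nest tree_le_nest_Leaf)

lemma not_tagged_le_nest: "\<not> bool_tree_le (tagged k) (nest l (Leaf False))"
  by (cases l) (auto simp: tagged_def tree_le_simps tree_le_Leaf_nest)

lemma nest_le_tagged: "bool_tree_le (nest l (Leaf False)) (tagged k) \<longleftrightarrow> l \<le> Suc k"
  by (cases l) (auto simp: tagged_def tree_le_simps tree_le_nest_nest tree_le_nest_Leaf)

definition fork :: "nat \<Rightarrow> nat \<Rightarrow> bool tree" where
  "fork k l = Node {|tagged k, nest l (Leaf False)|}"

lemma fork_le_fork:
  "bool_tree_le (fork k l) (fork k' l') \<longleftrightarrow> k \<le> k' \<and> (l \<le> l' \<or> l \<le> Suc k')"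
  by (auto simp: fork_def tree_le_Node_Node tagged_le_tagged not_tagged_le_nest nest_le_tagged tree_le_nest_nest)

lemma nest_True_le_tagged: "bool_tree_le (nest j (Leaf True)) (tagged k) \<longleftrightarrow> j \<le> 1"
  by (cases j) (auto simp: tagged_def tree_le_simps tree_le_nest_nest tree_le_nest_Leaf)

lemma not_nest_True_le_fork: "2 \<le> j \<Longrightarrow> \<not> bool_tree_le (nest (Suc j) (Leaf True)) (fork k l)"
  by (auto simp: fork_def tree_le_Node_Node nest_True_le_tagged tree_le_nest_nest)

lemma not_fork_le_nest_True: "j < l \<Longrightarrow> \<not> bool_tree_le (fork k l) (nest (Suc j) (Leaf True))"
  by (auto simp: fork_def tree_le_Node_Node tree_le_nest_nest)

lemma tf_fork: "fork k l \<in> Tf"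
  by (auto simp: Tf_def fork_def tagged_def intro!: tf.intros tf_nest)

theorem lemma3p22:
  shows "width_ge (tree_le ((\<le>) :: bool \<Rightarrow> bool \<Rightarrow> bool)) Tf omega_plus_one"
  unfolding omega_plus_one_def
proof (rule width_ge_succI)
  let ?x = "nest 3 (Leaf True)"
  show "?x \<in> Tf"
    by (simp add: Tf_def tf_nest tf.tf_leaf)
  show "width_ge bool_tree_le (incomparable_part bool_tree_le Tf ?x) (1::nat, 0::nat)"
  proof (rule width_ge_omega)
    fix n :: nat
    show "width_ge bool_tree_le (incomparable_part bool_tree_le Tf ?x) (0::nat, n)"
    proof (rule width_ge_antichain)
      fix i j assume "i < n" "j < n" "i \<noteq> j"
      then show "\<not> bool_tree_le (fork i (2 * n + 2 - i)) (fork j (2 * n + 2 - j))"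
        by (auto simp: fork_le_fork)
    next
      fix i assume "i < n"
      then show "fork i (2 * n + 2 - i) \<in> incomparable_part bool_tree_le Tf ?x"
        using not_nest_True_le_fork[of 2] not_fork_le_nest_True[of 2]
        by (simp add: incomparable_part_def tf_fork)
    qed
  qed
qed (auto simp: less_prod_def)

end
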